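(* Let $A\subset\mathbb N$ be a translate of an SIP set, i.e. suppose there exist an infinite set $L\subset\mathbb N$ and $u\in\mathbb Z$ with $(SIP(L)+u)\cap\mathbb N\subset A$. Then for every odd positive integer $K$, the map $\pi_K\circ z:A\to\mathbb Z/K\mathbb Z$ is surjective, where $\pi_K:\mathbb Z\to\mathbb Z/K\mathbb Z$ is the quotient map.
   Context: $\mathbb N=\{1,2,\dots\}$. For a finite $F\subset\mathbb Z$, $\sigma_F$ is the sum of its elements ($\sigma_\emptyset=0$); for $A\subset\mathbb Z$, $IP(A)=\{\sigma_F:F\subset A\text{ finite}\}$ and $SIP(A)=\{a-b:a,b\in IP(A)\}$. Every integer $t$ has a unique balanced ternary expansion $t=\sum_{n\in\mathbb N}\epsilon_n3^{n-1}$ with $\epsilon_n\in\{-1,0,1\}$, finitely many nonzero; let $r(t)$ be the number of nonzero digits and $j_1(t)<\dots<j_{r(t)}(t)$ their indices. The sign change count $z:\mathbb N\to\mathbb Z_+$ is $z(t)=\#\{i\in\{1,\dots,r(t)-1\}:\epsilon_{j_i(t)}\epsilon_{j_{i+1}(t)}<0\}$ (the number of sign changes between consecutive nonzero digits; in particular $z(3^{n-1})=0$). *)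

theory Defs
  imports "HOL-Number_Theory.Number_Theory"
begin

definition IP :: "int set \<Rightarrow> int set" where
  "IP A = {sum id F | F. F \<subseteq> A \<and> finite F}"

definition SIP :: "int set \<Rightarrow> int set" where
  "SIP A = {a - b | a b. a \<in> IP A \<and> b \<in> IP A}"

text \<open>Balanced ternary digit sequence: digits indexed by n = 1,2,... (value at 0 is 0),
  digit n carries weight 3^(n-1). Defined as the unique such expansion.\<close>
definition is_bt_expansion :: "int \<Rightarrow> (nat \<Rightarrow> int) \<Rightarrow> bool" where
  "is_bt_expansion t e \<longleftrightarrow>
     e 0 = 0 \<and> (\<forall>n. e n \<in> {-1, 0, 1}) \<and> finite {n. e n \<noteq> 0} \<and>
     t = (\<Sum>n\<in>{n. e n \<noteq> 0}. e n * 3 ^ (n - 1))"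

definition bt_digit :: "int \<Rightarrow> nat \<Rightarrow> int" where
  "bt_digit t = (THE e. is_bt_expansion t e)"

definition bt_support :: "int \<Rightarrow> nat list" where
  "bt_support t = sorted_list_of_set {n. bt_digit t n \<noteq> 0}"

definition zsc :: "int \<Rightarrow> nat" where
  "zsc t = card {i. i + 1 < length (bt_support t) \<and>
                    bt_digit t (bt_support t ! i) * bt_digit t (bt_support t ! (i + 1)) < 0}"

end

theory Submission
  imports Defs
begin

text \<open>
  Pick pairs x_i \<noteq> y_i in L whose differences d_i all have the same first and last nonzero
  balanced ternary digit and are divisible by powers of 3 so large that the digit string of
  u + \<epsilon>_0 d_0 + ... + \<epsilon>_(i-1) d_(i-1), with signs \<epsilon>_j = \<plusminus>1, is that of u followed by
  the strings of the \<epsilon>_j d_j; infiniteness of L and the pigeonhole principle provide them.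
  Then z of the sum is z(u) plus the z(d_j) plus the sign changes at the junctions, and the
  junction between blocks j and j+1 is a sign change iff \<epsilon>_j \<epsilon>_(j+1) times a fixed sign
  is negative. Alternating the signs over the first 2k+1 of 2K blocks makes z an affine function
  of 2k, and as 2 is invertible modulo the odd K every residue is reached. The sum lies in
  SIP(L) + u because the x_j, y_j are distinct, and it is positive because its last block
  dominates.
\<close>

section \<open>Balanced ternary digits\<close>

definition bt_low_digit :: "int \<Rightarrow> int" where
  "bt_low_digit t = (if t mod 3 = 2 then -1 else t mod 3)"

lemma bt_low_digit_range: "bt_low_digit t \<in> {-1, 0, 1}"
  unfolding bt_low_digit_def by auto

lemma bt_low_digit_dvd: "3 dvd (t - bt_low_digit t)"
  unfolding bt_low_digit_def by (auto simp: dvd_def) presburger+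

lemma bt_low_digit_0 [simp]: "bt_low_digit 0 = 0"
  by (simp add: bt_low_digit_def)

lemma bt_low_digit_add_mult_3 [simp]: "bt_low_digit (x + 3 * y) = bt_low_digit x"
  unfolding bt_low_digit_def by simp

lemma bt_low_digit_mult_3 [simp]: "bt_low_digit (3 * y) = 0"
  using bt_low_digit_add_mult_3[of 0 y] by simp

fun bt_digits :: "int \<Rightarrow> nat \<Rightarrow> int" where
  "bt_digits t 0 = 0"
| "bt_digits t (Suc 0) = bt_low_digit t"
| "bt_digits t (Suc (Suc n)) = bt_digits ((t - bt_low_digit t) div 3) (Suc n)"

lemma bt_digits_range: "bt_digits t n \<in> {-1, 0, 1}"
  by (induction t n rule: bt_digits.induct) (use bt_low_digit_range in auto)

lemma bt_digits_0_left [simp]: "bt_digits 0 n = 0"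
  by (induction "0::int" n rule: bt_digits.induct) auto

lemma bt_shift_bound:
  assumes "2 * \<bar>t\<bar> < 3 * P" "odd P"
  shows "2 * \<bar>(t - bt_low_digit t) div 3\<bar> < P"
proof -
  obtain q where q: "t - bt_low_digit t = 3 * q" using bt_low_digit_dvd by blast
  have "bt_low_digit t \<in> {-1, 0, 1}" by (rule bt_low_digit_range)
  then show ?thesis using assms q by (auto simp: abs_if) presburger+
qed

lemma bt_digits_eq_0_above:
  "2 * \<bar>t\<bar> < 3 ^ N \<Longrightarrow> N < n \<Longrightarrow> bt_digits t n = 0"
proof (induction N arbitrary: t n)
  case 0
  then have "t = 0" by simp
  then show ?case by simp
next
  case (Suc N)
  then obtain m where m: "n = Suc (Suc m)" by (cases n; cases "n - 1") auto
  have "2 * \<bar>(t - bt_low_digit t) div 3\<bar> < 3 ^ N"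
    by (rule bt_shift_bound) (use Suc.prems in auto)
  then show ?case using Suc m by simp
qed

lemma bt_digits_sum:
  "2 * \<bar>t\<bar> < 3 ^ N \<Longrightarrow> t = (\<Sum>n<N. bt_digits t (Suc n) * 3 ^ n)"
proof (induction N arbitrary: t)
  case 0
  then show ?case by simp
next
  case (Suc N)
  have "2 * \<bar>(t - bt_low_digit t) div 3\<bar> < 3 ^ N"
    by (rule bt_shift_bound) (use Suc.prems in auto)
  note IH = Suc.IH[OF this]
  have "(\<Sum>n<Suc N. bt_digits t (Suc n) * 3 ^ n)
      = bt_low_digit t + 3 * (\<Sum>n<N. bt_digits ((t - bt_low_digit t) div 3) (Suc n) * 3 ^ n)"
    unfolding sum.lessThan_Suc_shift by (simp add: sum_distrib_left mult_ac)
  also have "\<dots> = t" using IH bt_low_digit_dvd[of t] by auto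
  finally show ?case by simp
qed

lemma sum_support_eq_sum_lessThan:
  fixes e :: "nat \<Rightarrow> int"
  assumes "\<forall>n>N. e n = 0" "e 0 = 0"
  shows "(\<Sum>n\<in>{n. e n \<noteq> 0}. e n * 3 ^ (n - 1)) = (\<Sum>n<N. e (Suc n) * 3 ^ n)"
proof -
  have "{n. e n \<noteq> 0} \<subseteq> {1..N}"
    using assms by (auto simp: Suc_le_eq) (metis not_gr0, metis not_le)
  then have "(\<Sum>n\<in>{n. e n \<noteq> 0}. e n * 3 ^ (n - 1)) = (\<Sum>n\<in>{1..N}. e n * 3 ^ (n - 1))"
    by (intro sum.mono_neutral_left) auto
  also have "\<dots> = (\<Sum>n<N. e (Suc n) * 3 ^ n)"
    by (simp add: sum.atLeast1_atMost_eq)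
  finally show ?thesis .
qed

lemma ex_less_power3: "\<exists>N. (x::int) < 3 ^ N"
proof -
  have "int (nat x) < 2 ^ nat x"
    using less_exp[of "nat x"] by (metis of_nat_less_iff of_nat_numeral of_nat_power)
  then have "x < 2 ^ nat x" by linarith
  also have "(2::int) ^ nat x \<le> 3 ^ nat x" by (rule power_mono) auto
  finally show ?thesis ..
qed

lemma is_bt_expansion_bt_digits: "is_bt_expansion t (bt_digits t)"
proof -
  obtain N where N: "2 * \<bar>t\<bar> < 3 ^ N" using ex_less_power3 by blast
  have above: "\<forall>n>N. bt_digits t n = 0" using bt_digits_eq_0_above[OF N] by blast
  have "finite {n. bt_digits t n \<noteq> 0}"
    by (rule finite_subset[of _ "{..N}"]) (use above in \<open>auto simp: not_le[symmetric]\<close>)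
  moreover have "t = (\<Sum>n\<in>{n. bt_digits t n \<noteq> 0}. bt_digits t n * 3 ^ (n - 1))"
    using sum_support_eq_sum_lessThan[OF above] bt_digits_sum[OF N] by simp
  ultimately show ?thesis unfolding is_bt_expansion_def using bt_digits_range by auto
qed

lemma bt_digits_unique_lessThan:
  fixes e :: "nat \<Rightarrow> int"
  assumes "e 0 = 0" "\<forall>n. e n \<in> {-1, 0, 1}" "\<forall>n>N. e n = 0"
    and "t = (\<Sum>n<N. e (Suc n) * 3 ^ n)"
  shows "e = bt_digits t"
  using assms
proof (induction N arbitrary: t e)
  case 0
  then have "\<forall>n. e n = 0" by (metis neq0_conv)
  then show ?case using 0 by auto
next
  case (Suc N)
  define S where "S = (\<Sum>n<N. e (Suc (Suc n)) * 3 ^ n)"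
  have t: "t = e 1 + 3 * S"
    using Suc.prems(4) unfolding S_def sum.lessThan_Suc_shift
    by (simp add: sum_distrib_left mult_ac)
  have "e 1 \<in> {-1, 0, 1}" using Suc.prems(2) by blast
  then have lsd: "bt_low_digit t = e 1" unfolding t bt_low_digit_def by auto
  define e' where "e' n = (if n = 0 then 0 else e (Suc n))" for n
  have "e' = bt_digits S"
    by (rule Suc.IH) (use Suc.prems in \<open>auto simp: e'_def S_def\<close>)
  then have shift: "e (Suc (Suc n)) = bt_digits S (Suc n)" for n
    by (metis e'_def nat.distinct(1))
  have S: "(t - bt_low_digit t) div 3 = S" using t lsd by simp
  have "e n = bt_digits t n" for n
  proof (cases "(t, n)" rule: bt_digits.cases)
    case (3 t' m)
    then show ?thesis using shift S by simp
  qed (use Suc.prems(1) lsd in auto)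
  then show ?case by blast
qed

lemma bt_digits_unique:
  assumes "is_bt_expansion t e" shows "e = bt_digits t"
proof -
  have f: "finite {n. e n \<noteq> 0}" and e0: "e 0 = 0" and r: "\<forall>n. e n \<in> {-1, 0, 1}"
    and t: "t = (\<Sum>n\<in>{n. e n \<noteq> 0}. e n * 3 ^ (n - 1))"
    using assms unfolding is_bt_expansion_def by auto
  define N where "N = Max (insert 0 {n. e n \<noteq> 0})"
  have above: "\<forall>n>N. e n = 0" using f unfolding N_def
    by (metis (mono_tags, lifting) Max_ge finite_insert insertCI leD mem_Collect_eq)
  show ?thesis
    by (rule bt_digits_unique_lessThan[OF e0 r above]) (use t sum_support_eq_sum_lessThan[OF above e0] in simp)
qed

lemma bt_digit_eq_bt_digits: "bt_digit t = bt_digits t"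
  unfolding bt_digit_def by (metis the_equality is_bt_expansion_bt_digits bt_digits_unique)

lemma bt_digits_uminus: "bt_digits (- t) n = - bt_digits t n"
proof -
  obtain N where N: "2 * \<bar>t\<bar> < 3 ^ N" using ex_less_power3 by blast
  have "(\<lambda>n. - bt_digits t n) = bt_digits (- t)"
  proof (rule bt_digits_unique_lessThan[where N = N])
    show "\<forall>n. - bt_digits t n \<in> {-1, 0, 1}" using bt_digits_range by fastforce
    show "\<forall>n>N. - bt_digits t n = 0" using bt_digits_eq_0_above[OF N] by auto
    show "- t = (\<Sum>n<N. - bt_digits t (Suc n) * 3 ^ n)"
      using bt_digits_sum[OF N] by (simp add: sum_negf)
  qed simp
  then show ?thesis by metis
qed

lemma bt_digits_power3_mult: "n \<le> M \<Longrightarrow> bt_digits (3 ^ M * q) n = 0"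
proof (induction M arbitrary: n)
  case 0
  then show ?case by simp
next
  case (Suc M)
  show ?case
  proof (cases n)
    case (Suc m)
    then show ?thesis using Suc.IH Suc.prems by (cases m) (auto simp: mult.assoc)
  qed simp
qed

lemma bt_digits_add_power3_mult:
  "2 * \<bar>a\<bar> < 3 ^ M \<Longrightarrow> bt_digits (a + 3 ^ M * q) n = bt_digits a n + bt_digits (3 ^ M * q) n"
proof (induction M arbitrary: a n)
  case 0
  then have "a = 0" by simp
  then show ?case by simp
next
  case (Suc M)
  define a' where "a' = (a - bt_low_digit a) div 3"
  have a': "2 * \<bar>a'\<bar> < 3 ^ M" unfolding a'_def by (rule bt_shift_bound) (use Suc.prems in auto)
  have "(a + 3 ^ Suc M * q - bt_low_digit a) div 3 = a' + 3 ^ M * q"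
    using bt_low_digit_dvd[of a] unfolding a'_def by auto
  then show ?case
    using Suc.IH[OF a'] by (cases "(a, n)" rule: bt_digits.cases) (auto simp: a'_def mult.assoc)
qed

section \<open>Digit strings and sign changes\<close>

definition bt_digit_list :: "int \<Rightarrow> int list" where
  "bt_digit_list t = map (bt_digit t) (bt_support t)"

lemma finite_bt_digits_support: "finite {n. bt_digits t n \<noteq> 0}"
  using is_bt_expansion_bt_digits[of t] unfolding is_bt_expansion_def by auto

lemma bt_digit_list_eq:
  "bt_digit_list t = map (bt_digits t) (sorted_list_of_set {n. bt_digits t n \<noteq> 0})"
  unfolding bt_digit_list_def bt_support_def bt_digit_eq_bt_digits ..

lemma sorted_list_of_set_Un_less:
  fixes A B :: "'a::linorder set"
  assumes "finite A" "finite B" "\<forall>x\<in>A. \<forall>y\<in>B. x < y"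
  shows "sorted_list_of_set (A \<union> B) = sorted_list_of_set A @ sorted_list_of_set B"
proof -
  have "A \<inter> B = {}" using assms(3) by auto
  then show ?thesis
    using assms by (subst sorted_list_of_set_unique[symmetric])
      (auto simp: sorted_wrt_append card_Un_disjoint)
qed

lemma bt_digit_list_add:
  assumes "3 ^ M dvd d" "2 * \<bar>a\<bar> < 3 ^ M"
  shows "bt_digit_list (a + d) = bt_digit_list a @ bt_digit_list d"
proof -
  obtain q where d: "d = 3 ^ M * q" using assms(1) by blast
  have add: "bt_digits (a + d) n = bt_digits a n + bt_digits d n" for n
    using bt_digits_add_power3_mult[OF assms(2)] d by simp
  have low: "bt_digits a n \<noteq> 0 \<Longrightarrow> n \<le> M" for n
    using bt_digits_eq_0_above[OF assms(2)] by (meson not_le)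
  have high: "bt_digits d n \<noteq> 0 \<Longrightarrow> M < n" for n
    using bt_digits_power3_mult d by (meson not_le)
  have disj: "bt_digits a n = 0 \<or> bt_digits d n = 0" for n
    using low[of n] high[of n] by linarith
  have supp: "{n. bt_digits (a + d) n \<noteq> 0} = {n. bt_digits a n \<noteq> 0} \<union> {n. bt_digits d n \<noteq> 0}"
    using add disj by (auto dest: spec) (metis add.right_neutral, metis add.left_neutral)
  have sorted: "sorted_list_of_set {n. bt_digits (a + d) n \<noteq> 0} =
     sorted_list_of_set {n. bt_digits a n \<noteq> 0} @ sorted_list_of_set {n. bt_digits d n \<noteq> 0}"
    unfolding supp by (rule sorted_list_of_set_Un_less[OF finite_bt_digits_support finite_bt_digits_support])
      (use low high le_less_trans in blast)
  show ?thesis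
    unfolding bt_digit_list_eq sorted map_append
    using add disj finite_bt_digits_support by (intro arg_cong2[where f = "(@)"] map_cong) auto
qed

lemma bt_digit_list_sign_mult:
  assumes "e \<in> {-1, 1}"
  shows "bt_digit_list (e * t) = map ((*) e) (bt_digit_list t)"
  using assms unfolding bt_digit_list_eq by (auto simp: bt_digits_uminus)

lemma set_bt_digit_list: "set (bt_digit_list t) \<subseteq> {-1, 1}"
  unfolding bt_digit_list_eq using finite_bt_digits_support bt_digits_range by auto

lemma bt_digit_list_eq_Nil_iff: "bt_digit_list t = [] \<longleftrightarrow> t = 0"
proof -
  have "{n. bt_digits t n \<noteq> 0} = {} \<longleftrightarrow> t = 0"
    using is_bt_expansion_bt_digits[of t] unfolding is_bt_expansion_def by auto
  then show ?thesis
    unfolding bt_digit_list_eq using finite_bt_digits_support by simp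
qed

fun sign_changes :: "int list \<Rightarrow> nat" where
  "sign_changes (a # b # xs) = of_bool (a * b < 0) + sign_changes (b # xs)"
| "sign_changes _ = 0"

lemma card_sign_changes:
  "card {i. i + 1 < length xs \<and> xs ! i * xs ! (i + 1) < 0} = sign_changes xs"
proof (induction xs rule: sign_changes.induct)
  case (1 a b xs)
  define I where "I ys = {i. i + 1 < length ys \<and> ys ! i * ys ! (i + 1) < (0::int)}" for ys
  have split: "I (a # b # xs) = {i. i = 0 \<and> a * b < 0} \<union> Suc ` I (b # xs)"
  proof (rule Set.set_eqI)
    fix i
    show "i \<in> I (a # b # xs) \<longleftrightarrow> i \<in> {i. i = 0 \<and> a * b < 0} \<union> Suc ` I (b # xs)"
      unfolding I_def by (cases i) (auto simp: image_iff)
  qed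
  have "finite (I (b # xs))" unfolding I_def by (rule finite_subset[of _ "{..<length (b # xs)}"]) auto
  then have "card (I (a # b # xs)) = of_bool (a * b < 0) + card (I (b # xs))"
    unfolding split by (subst card_Un_disjoint) (auto simp: card_image)
  then show ?case using "1.IH" unfolding I_def by simp
qed auto

lemma zsc_eq_sign_changes: "zsc t = sign_changes (bt_digit_list t)"
  unfolding zsc_def card_sign_changes[symmetric] bt_digit_list_def
  by (intro arg_cong[where f = card] Collect_cong) auto

lemma sign_changes_append:
  "sign_changes (xs @ ys) =
     sign_changes xs + sign_changes ys + of_bool (xs \<noteq> [] \<and> ys \<noteq> [] \<and> last xs * hd ys < 0)"
proof (induction xs)
  case (Cons x xs)
  then show ?case by (cases xs; cases ys) auto
qed simp

lemma sign_changes_map_mult: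
  assumes "c \<noteq> 0"
  shows "sign_changes (map ((*) c) xs) = sign_changes xs"
proof (induction xs rule: sign_changes.induct)
  case (1 a b xs)
  have "c * a * (c * b) = (c * c) * (a * b)" by (simp add: mult_ac)
  moreover have "c * c > 0" using assms by (auto simp: zero_less_mult_iff linorder_neq_iff)
  ultimately have "c * a * (c * b) < 0 \<longleftrightarrow> a * b < 0"
    by (metis mult_less_cancel_left_pos mult_zero_right)
  then show ?case using "1.IH" by simp
qed auto

section \<open>Separated signed sums\<close>

text \<open>Each block is divisible by a power of 3 exceeding twice every signed partial sum before it,
  so by \<open>bt_digit_list_add\<close> its digits come after all digits of that partial sum.\<close>

definition ternary_separated :: "int \<Rightarrow> (nat \<Rightarrow> int) \<Rightarrow> nat \<Rightarrow> bool" where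
  "ternary_separated u d n \<longleftrightarrow>
     (\<forall>i<n. \<exists>M. 3 ^ M dvd d i \<and> 2 * (\<bar>u\<bar> + (\<Sum>j<i. \<bar>d j\<bar>)) < 3 ^ M)"

lemma ternary_separated_cong:
  assumes "\<And>i. i < n \<Longrightarrow> d i = d' i"
  shows "ternary_separated u d n \<longleftrightarrow> ternary_separated u d' n"
proof -
  have "(\<Sum>j<i. \<bar>d j\<bar>) = (\<Sum>j<i. \<bar>d' j\<bar>)" if "i < n" for i
    using assms that by (intro sum.cong) auto
  then have "(\<exists>M. 3 ^ M dvd d i \<and> 2 * (\<bar>u\<bar> + (\<Sum>j<i. \<bar>d j\<bar>)) < 3 ^ M) \<longleftrightarrow>
      (\<exists>M. 3 ^ M dvd d' i \<and> 2 * (\<bar>u\<bar> + (\<Sum>j<i. \<bar>d' j\<bar>)) < 3 ^ M)" if "i < n" for i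
    using assms[OF that] that by simp
  then show ?thesis unfolding ternary_separated_def by blast
qed

lemma ternary_separated_Suc:
  "ternary_separated u d (Suc n) \<longleftrightarrow> ternary_separated u d n
     \<and> (\<exists>M. 3 ^ M dvd d n \<and> 2 * (\<bar>u\<bar> + (\<Sum>j<n. \<bar>d j\<bar>)) < 3 ^ M)"
  unfolding ternary_separated_def by (auto simp: less_Suc_eq)

lemma ternary_separated_mono: "ternary_separated u d n \<Longrightarrow> m \<le> n \<Longrightarrow> ternary_separated u d m"
  unfolding ternary_separated_def by auto

lemma abs_signed_sum_le:
  fixes d :: "nat \<Rightarrow> int"
  assumes "\<forall>i<n. \<epsilon> i \<in> {-1, 1}"
  shows "\<bar>\<Sum>i<n. \<epsilon> i * d i\<bar> \<le> (\<Sum>i<n. \<bar>d i\<bar>)"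
proof -
  have "\<bar>\<Sum>i<n. \<epsilon> i * d i\<bar> \<le> (\<Sum>i<n. \<bar>\<epsilon> i * d i\<bar>)" by (rule sum_abs)
  also have "\<dots> = (\<Sum>i<n. \<bar>d i\<bar>)" using assms by (intro sum.cong) (auto simp: abs_mult)
  finally show ?thesis .
qed

lemma ternary_separated_signed_sum:
  assumes "ternary_separated u d n" "i < n" "\<forall>j<i. \<epsilon> j \<in> {-1, 1}"
  shows "\<exists>M. 3 ^ M dvd d i \<and> 2 * \<bar>u + (\<Sum>j<i. \<epsilon> j * d j)\<bar> < 3 ^ M"
proof -
  obtain M where M: "3 ^ M dvd d i" "2 * (\<bar>u\<bar> + (\<Sum>j<i. \<bar>d j\<bar>)) < 3 ^ M"
    using assms(1,2) unfolding ternary_separated_def by blast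
  have "\<bar>u + (\<Sum>j<i. \<epsilon> j * d j)\<bar> \<le> \<bar>u\<bar> + (\<Sum>j<i. \<bar>d j\<bar>)"
    using abs_signed_sum_le[OF assms(3), of d] by linarith
  then show ?thesis using M by auto
qed

lemma bt_digit_list_signed_sum:
  assumes "ternary_separated u d n" "\<forall>i<n. \<epsilon> i \<in> {-1, 1}"
  shows "bt_digit_list (u + (\<Sum>i<n. \<epsilon> i * d i)) =
           bt_digit_list u @ concat (map (\<lambda>i. map ((*) (\<epsilon> i)) (bt_digit_list (d i))) [0..<n])"
  using assms
proof (induction n)
  case (Suc n)
  obtain M where M: "3 ^ M dvd d n" "2 * \<bar>u + (\<Sum>j<n. \<epsilon> j * d j)\<bar> < 3 ^ M"
    using ternary_separated_signed_sum[OF Suc.prems(1) lessI, of \<epsilon>] Suc.prems(2) by auto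
  have "3 ^ M dvd \<epsilon> n * d n" using M(1) by simp
  from bt_digit_list_add[OF this M(2)]
  have "bt_digit_list (u + (\<Sum>i<Suc n. \<epsilon> i * d i)) =
      bt_digit_list (u + (\<Sum>i<n. \<epsilon> i * d i)) @ bt_digit_list (\<epsilon> n * d n)"
    by (simp add: add.assoc)
  then show ?case
    using Suc ternary_separated_mono[OF Suc.prems(1)] by (simp add: bt_digit_list_sign_mult)
qed simp

lemma sign_changes_append_concat:
  assumes "\<forall>i\<le>n. b i \<noteq> []"
  shows "sign_changes (xs @ concat (map b [0..<Suc n])) =
           sign_changes xs + (\<Sum>i\<le>n. sign_changes (b i))
           + of_bool (xs \<noteq> [] \<and> last xs * hd (b 0) < 0)
           + (\<Sum>i<n. of_bool (last (b i) * hd (b (Suc i)) < 0))"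
  using assms
proof (induction n)
  case 0
  then show ?case by (simp add: sign_changes_append)
next
  case (Suc n)
  define P where "P = xs @ concat (map b [0..<Suc n])"
  have P: "P \<noteq> []" "last P = last (b n)"
    using Suc.prems by (auto simp: P_def last_append)
  have "sign_changes (xs @ concat (map b [0..<Suc (Suc n)])) = sign_changes (P @ b (Suc n))"
    by (simp add: P_def)
  also have "\<dots> = sign_changes P + sign_changes (b (Suc n))
      + of_bool (last (b n) * hd (b (Suc n)) < 0)"
    using P Suc.prems by (simp add: sign_changes_append)
  finally show ?case
    using Suc by (simp add: P_def)
qed

text \<open>Consecutive signs differ exactly at the first 2k junctions; from index 2k on the sign is s.\<close>

definition alt_signs :: "int \<Rightarrow> nat \<Rightarrow> nat \<Rightarrow> int" where
  "alt_signs s k i = (if i \<le> 2 * k \<and> odd i then - s else s)"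

lemma alt_signs_mult_Suc:
  assumes "s \<in> {-1, 1}"
  shows "alt_signs s k i * alt_signs s k (Suc i) = (if i < 2 * k then -1 else 1)"
  using assms unfolding alt_signs_def by (auto elim: oddE)

lemma sum_alt_signs_changes:
  assumes "s \<in> {-1, 1}" "h \<in> {-1, 1}" "2 * k \<le> m"
  shows "(\<Sum>i<m. of_bool (alt_signs s k i * alt_signs s k (Suc i) * h < 0)) =
           (if h < 0 then m - 2 * k else 2 * k)"
proof -
  have "(\<Sum>i<m. of_bool (alt_signs s k i * alt_signs s k (Suc i) * h < 0)) =
      card ({..<m} \<inter> {i. if h < 0 then \<not> i < 2 * k else i < 2 * k})"
    using assms(2) by (auto simp: alt_signs_mult_Suc[OF assms(1)] intro!: arg_cong[where f = card])
  also have "\<dots> = (if h < 0 then m - 2 * k else 2 * k)"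
  proof -
    have "{..<m} \<inter> {i. \<not> i < 2 * k} = {2 * k..<m}" "{..<m} \<inter> {i. i < 2 * k} = {..<2 * k}"
      using assms(3) by auto
    then show ?thesis by simp
  qed
  finally show ?thesis .
qed

lemma zsc_alt_signed_sum:
  assumes sep: "ternary_separated u d (Suc m)"
    and blocks: "\<forall>i\<le>m. d i \<noteq> 0 \<and> hd (bt_digit_list (d i)) = lo \<and> last (bt_digit_list (d i)) = hi"
    and s: "s \<in> {-1, 1}" and k: "2 * k \<le> m"
  shows "zsc (u + (\<Sum>i<Suc m. alt_signs s k i * d i)) =
           zsc u + (\<Sum>i\<le>m. zsc (d i)) + of_bool (u \<noteq> 0 \<and> last (bt_digit_list u) * (s * lo) < 0)
           + (if hi * lo < 0 then m - 2 * k else 2 * k)"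
proof -
  define \<epsilon> where "\<epsilon> = alt_signs s k"
  define b where "b i = map ((*) (\<epsilon> i)) (bt_digit_list (d i))" for i
  have eps: "\<epsilon> i \<in> {-1, 1}" for i using s by (auto simp: \<epsilon>_def alt_signs_def)
  have ne: "\<forall>i\<le>m. bt_digit_list (d i) \<noteq> []" using blocks by (simp add: bt_digit_list_eq_Nil_iff)
  have "lo \<in> set (bt_digit_list (d 0))" "hi \<in> set (bt_digit_list (d 0))"
    using blocks ne by (metis hd_in_set last_in_set le0)+
  then have "lo \<in> {-1, 1}" "hi \<in> {-1, 1}" using set_bt_digit_list by blast+
  then have hilo: "hi * lo \<in> {-1, 1}" by auto
  have changes: "sign_changes (b i) = zsc (d i)" for i
    using eps[of i] by (auto simp: b_def sign_changes_map_mult zsc_eq_sign_changes)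
  have first: "hd (b 0) = s * lo"
    using blocks ne by (simp add: b_def hd_map \<epsilon>_def alt_signs_def)
  have "(\<Sum>i<m. of_bool (last (b i) * hd (b (Suc i)) < 0)) =
      (\<Sum>i<m. of_bool (\<epsilon> i * \<epsilon> (Suc i) * (hi * lo) < 0))"
    using blocks ne by (intro sum.cong) (simp_all add: b_def hd_map last_map mult_ac)
  also have "\<dots> = (if hi * lo < 0 then m - 2 * k else 2 * k)"
    unfolding \<epsilon>_def using sum_alt_signs_changes[OF s hilo k] .
  finally have junctions: "(\<Sum>i<m. of_bool (last (b i) * hd (b (Suc i)) < 0)) =
      (if hi * lo < 0 then m - 2 * k else 2 * k)" .
  have "bt_digit_list (u + (\<Sum>i<Suc m. \<epsilon> i * d i)) = bt_digit_list u @ concat (map b [0..<Suc m])"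
    unfolding b_def using eps by (intro bt_digit_list_signed_sum[OF sep]) auto
  then have "zsc (u + (\<Sum>i<Suc m. \<epsilon> i * d i)) = sign_changes (bt_digit_list u @ concat (map b [0..<Suc m]))"
    by (simp add: zsc_eq_sign_changes)
  also have "\<dots> = sign_changes (bt_digit_list u) + (\<Sum>i\<le>m. sign_changes (b i))
      + of_bool (bt_digit_list u \<noteq> [] \<and> last (bt_digit_list u) * hd (b 0) < 0)
      + (\<Sum>i<m. of_bool (last (b i) * hd (b (Suc i)) < 0))"
    by (rule sign_changes_append_concat) (use ne in \<open>simp add: b_def\<close>)
  also have "\<dots> = zsc u + (\<Sum>i\<le>m. zsc (d i)) + of_bool (u \<noteq> 0 \<and> last (bt_digit_list u) * (s * lo) < 0)
      + (if hi * lo < 0 then m - 2 * k else 2 * k)"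
    unfolding changes first junctions bt_digit_list_eq_Nil_iff zsc_eq_sign_changes[of u] ..
  finally show ?thesis by (simp add: \<epsilon>_def)
qed

lemma ex_double_cong:
  fixes K :: nat
  assumes "odd K"
  shows "\<exists>k<K. [2 * int k = v] (mod int K)"
proof -
  have K: "int K > 0" using assms by (auto intro: odd_pos)
  define k where "k = nat ((v * ((int K + 1) div 2)) mod int K)"
  have "k < K" using K by (simp add: k_def nat_less_iff)
  have "[2 * int k = 2 * (v * ((int K + 1) div 2))] (mod int K)"
    using K by (simp add: k_def cong_mult cong_mod_left)
  also have "2 * (v * ((int K + 1) div 2)) = v + v * int K"
    using assms by (auto elim!: oddE simp: algebra_simps)
  also have "[v + v * int K = v] (mod int K)"
    by (simp add: cong_iff_dvd_diff)
  finally show ?thesis using \<open>k < K\<close> by blast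
qed

definition same_digit_ends :: "(nat \<Rightarrow> int) \<Rightarrow> nat \<Rightarrow> bool" where
  "same_digit_ends d n \<longleftrightarrow> (\<forall>i<n. d i \<noteq> 0
     \<and> hd (bt_digit_list (d i)) = hd (bt_digit_list (d 0))
     \<and> last (bt_digit_list (d i)) = last (bt_digit_list (d 0)))"

lemma ex_alt_signed_sum_zsc_cong:
  assumes K: "odd K" and sep: "ternary_separated u d (2 * K)"
    and blocks: "same_digit_ends d (2 * K)" and s: "s \<in> {-1, 1}"
  shows "\<exists>k<K. [int (zsc (u + (\<Sum>i<2 * K. alt_signs s k i * d i))) = c] (mod int K)"
proof -
  define m where "m = 2 * K - 1"
  have m: "Suc m = 2 * K" using odd_pos[OF K] unfolding m_def by simp
  define lo where "lo = hd (bt_digit_list (d 0))"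
  define hi where "hi = last (bt_digit_list (d 0))"
  define B where "B = int (zsc u + (\<Sum>i\<le>m. zsc (d i))
                     + of_bool (u \<noteq> 0 \<and> last (bt_digit_list u) * (s * lo) < 0))"
  have zsc: "int (zsc (u + (\<Sum>i<2 * K. alt_signs s k i * d i))) =
      (if hi * lo < 0 then B + int m - 2 * int k else B + 2 * int k)" if "k < K" for k
  proof -
    have "2 * k \<le> m" using that unfolding m_def by simp
    moreover have "\<forall>i\<le>m. d i \<noteq> 0 \<and> hd (bt_digit_list (d i)) = lo \<and> last (bt_digit_list (d i)) = hi"
      using blocks m unfolding same_digit_ends_def lo_def hi_def by (metis le_imp_less_Suc)
    ultimately show ?thesis
      using zsc_alt_signed_sum[of u d m lo hi s k] sep s unfolding B_def m[symmetric]
      by (simp add: of_nat_diff)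
  qed
  obtain k where "k < K" and k: "[2 * int k = (if hi * lo < 0 then B + int m - c else c - B)] (mod int K)"
    using ex_double_cong[OF K] by blast
  then have "[int (zsc (u + (\<Sum>i<2 * K. alt_signs s k i * d i))) = c] (mod int K)"
    unfolding zsc[OF \<open>k < K\<close>] cong_iff_dvd_diff
    by (cases "hi * lo < 0") (simp_all add: dvd_diff_commute algebra_simps)
  then show ?thesis using \<open>k < K\<close> by blast
qed

lemma signed_sum_pos:
  assumes "ternary_separated u d (Suc m)" "\<forall>i<m. \<epsilon> i \<in> {-1, 1}" "0 < \<epsilon> m * d m"
  shows "0 < u + (\<Sum>i<Suc m. \<epsilon> i * d i)"
proof -
  obtain M where M: "3 ^ M dvd d m" "2 * \<bar>u + (\<Sum>i<m. \<epsilon> i * d i)\<bar> < 3 ^ M"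
    using ternary_separated_signed_sum[OF assms(1) lessI, of \<epsilon>] assms(2) by auto
  have "3 ^ M dvd \<epsilon> m * d m" using M(1) by simp
  then have "3 ^ M \<le> \<epsilon> m * d m" using assms(3) by (rule zdvd_imp_le)
  moreover have "- (u + (\<Sum>i<m. \<epsilon> i * d i)) < 3 ^ M" using M(2) by arith
  ultimately show ?thesis by simp
qed

lemma inj_on_if_disjoint_images:
  assumes "inj_on X I" "inj_on Y I" "X ` I \<inter> Y ` I = {}"
  shows "inj_on (\<lambda>i. if P i then X i else Y i) I"
proof (rule inj_onI)
  fix i j assume "i \<in> I" "j \<in> I" "(if P i then X i else Y i) = (if P j then X j else Y j)"
  then show "i = j" using assms by (cases "P i"; cases "P j") (auto dest: inj_onD)
qed

lemma signed_sum_in_SIP: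
  fixes X Y \<epsilon> :: "nat \<Rightarrow> int"
  assumes L: "\<forall>i<n. X i \<in> L \<and> Y i \<in> L" and inj: "inj_on X {..<n}" "inj_on Y {..<n}"
    and disj: "X ` {..<n} \<inter> Y ` {..<n} = {}" and eps: "\<forall>i<n. \<epsilon> i \<in> {-1, 1}"
  shows "(\<Sum>i<n. \<epsilon> i * (X i - Y i)) \<in> SIP L"
proof -
  define f where "f i = (if \<epsilon> i = 1 then X i else Y i)" for i
  define g where "g i = (if \<epsilon> i \<noteq> 1 then X i else Y i)" for i
  have "inj_on f {..<n}" "inj_on g {..<n}"
    unfolding f_def g_def using inj disj by (auto intro!: inj_on_if_disjoint_images)
  then have sums: "sum id (f ` {..<n}) = (\<Sum>i<n. f i)" "sum id (g ` {..<n}) = (\<Sum>i<n. g i)"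
    by (simp_all add: sum.reindex)
  have "(\<Sum>i<n. \<epsilon> i * (X i - Y i)) = (\<Sum>i<n. f i - g i)"
    using eps by (intro sum.cong) (auto simp: f_def g_def)
  also have "\<dots> = sum id (f ` {..<n}) - sum id (g ` {..<n})"
    unfolding sums by (rule sum_subtractf)
  finally have "(\<Sum>i<n. \<epsilon> i * (X i - Y i)) = sum id (f ` {..<n}) - sum id (g ` {..<n})" .
  moreover have "sum id (f ` {..<n}) \<in> IP L" "sum id (g ` {..<n}) \<in> IP L"
    unfolding IP_def using L by (auto simp: f_def g_def)
  ultimately show ?thesis unfolding SIP_def by blast
qed

section \<open>Differences in an infinite set\<close>

lemma ex_class_of_divisible_differences:
  fixes cls :: "int \<Rightarrow> 'c"
  assumes L: "infinite L" and C: "finite (range cls)"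
  shows "\<exists>c. \<forall>M E. finite E \<longrightarrow>
           (\<exists>x\<in>L - E. \<exists>y\<in>L - E. x \<noteq> y \<and> 3 ^ M dvd x - y \<and> cls (x - y) = c)"
proof (rule ccontr)
  assume "\<not> ?thesis"
  then have "\<forall>c. \<exists>M E. finite E \<and>
      \<not> (\<exists>x\<in>L - E. \<exists>y\<in>L - E. x \<noteq> y \<and> 3 ^ M dvd x - y \<and> cls (x - y) = c)"
    by (simp only: not_ex not_all not_imp simp_thms)
  then obtain Mc where "\<forall>c. \<exists>E. finite E \<and>
      \<not> (\<exists>x\<in>L - E. \<exists>y\<in>L - E. x \<noteq> y \<and> 3 ^ Mc c dvd x - y \<and> cls (x - y) = c)"
    by (auto dest: choice)
  then obtain Ec where bad: "\<forall>c. finite (Ec c) \<and>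
      \<not> (\<exists>x\<in>L - Ec c. \<exists>y\<in>L - Ec c. x \<noteq> y \<and> 3 ^ Mc c dvd x - y \<and> cls (x - y) = c)"
    by (auto dest: choice)
  define M where "M = (\<Sum>c\<in>range cls. Mc c)"
  define E where "E = (\<Union>c\<in>range cls. Ec c)"
  have "finite E" using C bad unfolding E_def by blast
  then have "infinite (L - E)" using L by simp
  moreover have "(\<lambda>x. x mod 3 ^ M) ` (L - E) \<subseteq> {0..<3 ^ M}" by auto
  ultimately have "\<not> inj_on (\<lambda>x. x mod 3 ^ M) (L - E)"
    by (metis finite_atLeastLessThan_int finite_imageD finite_subset)
  then obtain x y where xy: "x \<in> L - E" "y \<in> L - E" "x \<noteq> y" "x mod 3 ^ M = y mod 3 ^ M"
    unfolding inj_on_def by blast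
  define c where "c = cls (x - y)"
  have "Mc c \<le> M" unfolding M_def c_def using C by (intro member_le_sum) auto
  then have "3 ^ Mc c dvd (3::int) ^ M" by (rule le_imp_power_dvd)
  moreover have "3 ^ M dvd x - y" using xy(4) by (simp add: mod_eq_dvd_iff)
  ultimately have "3 ^ Mc c dvd x - y" by (rule dvd_trans)
  moreover have "x \<in> L - Ec c" "y \<in> L - Ec c" using xy unfolding E_def c_def by auto
  ultimately show False using bad xy(3) unfolding c_def by blast
qed

lemma ex_separated_differences:
  fixes cls :: "int \<Rightarrow> 'c"
  assumes good: "\<forall>M E. finite E \<longrightarrow>
                   (\<exists>x\<in>L - E. \<exists>y\<in>L - E. x \<noteq> y \<and> 3 ^ M dvd x - y \<and> cls (x - y) = c)"
  shows "\<exists>X Y. (\<forall>i<n. X i \<in> L \<and> Y i \<in> L \<and> cls (X i - Y i) = c)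
           \<and> inj_on X {..<n} \<and> inj_on Y {..<n} \<and> X ` {..<n} \<inter> Y ` {..<n} = {}
           \<and> ternary_separated u (\<lambda>i. X i - Y i) n"
proof (induction n)
  case 0
  then show ?case by (simp add: ternary_separated_def)
next
  case (Suc n)
  then obtain X Y where XY: "\<forall>i<n. X i \<in> L \<and> Y i \<in> L \<and> cls (X i - Y i) = c"
    and inj: "inj_on X {..<n}" "inj_on Y {..<n}" and disj: "X ` {..<n} \<inter> Y ` {..<n} = {}"
    and sep: "ternary_separated u (\<lambda>i. X i - Y i) n"
    by blast
  obtain M where M: "2 * (\<bar>u\<bar> + (\<Sum>j<n. \<bar>X j - Y j\<bar>)) < (3::int) ^ M"
    using ex_less_power3 by blast
  have "finite (X ` {..<n} \<union> Y ` {..<n})" by simp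
  with good obtain x y where xy: "x \<in> L" "y \<in> L" "x \<notin> X ` {..<n} \<union> Y ` {..<n}"
    "y \<notin> X ` {..<n} \<union> Y ` {..<n}" "x \<noteq> y" "3 ^ M dvd x - y" "cls (x - y) = c"
    by blast
  define X' where "X' = X(n := x)"
  define Y' where "Y' = Y(n := y)"
  have img: "X' ` {..<n} = X ` {..<n}" "Y' ` {..<n} = Y ` {..<n}"
    unfolding X'_def Y'_def by auto
  have "ternary_separated u (\<lambda>i. X' i - Y' i) n"
    using ternary_separated_cong[of n "\<lambda>i. X i - Y i" "\<lambda>i. X' i - Y' i" u] sep
    by (simp add: X'_def Y'_def)
  moreover have "(\<Sum>j<n. \<bar>X' j - Y' j\<bar>) = (\<Sum>j<n. \<bar>X j - Y j\<bar>)"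
    unfolding X'_def Y'_def by (intro sum.cong) auto
  ultimately have "ternary_separated u (\<lambda>i. X' i - Y' i) (Suc n)"
    using xy(6) M unfolding ternary_separated_Suc by (auto simp: X'_def Y'_def)
  moreover have "inj_on X' {..<Suc n}" "inj_on Y' {..<Suc n}"
  proof -
    have "inj_on X' {..<n} \<longleftrightarrow> inj_on X {..<n}" "inj_on Y' {..<n} \<longleftrightarrow> inj_on Y {..<n}"
      unfolding X'_def Y'_def by (auto intro!: inj_on_cong)
    then have "inj_on X' {..<n}" "inj_on Y' {..<n}" using inj by simp_all
    then show "inj_on X' {..<Suc n}" "inj_on Y' {..<Suc n}"
      using xy(3,4) img by (simp_all add: lessThan_Suc X'_def Y'_def)
  qed
  moreover have "X' ` {..<Suc n} \<inter> Y' ` {..<Suc n} = {}"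
    unfolding lessThan_Suc image_insert img using disj xy(3-5) by (auto simp: X'_def Y'_def)
  moreover have "\<forall>i<Suc n. X' i \<in> L \<and> Y' i \<in> L \<and> cls (X' i - Y' i) = c"
    using XY xy unfolding X'_def Y'_def by (simp add: less_Suc_eq)
  ultimately show ?case by blast
qed

lemma finite_range_hd_last_bt_digit_list:
  "finite (range (\<lambda>t. (hd (bt_digit_list t), last (bt_digit_list t))))"
proof (rule finite_subset)
  show "range (\<lambda>t. (hd (bt_digit_list t), last (bt_digit_list t))) \<subseteq>
      insert (hd [], last []) ({-1, 1} \<times> {-1, 1})"
  proof (rule image_subsetI)
    fix t
    show "(hd (bt_digit_list t), last (bt_digit_list t)) \<in> insert (hd [], last []) ({-1, 1} \<times> {-1, 1})"
    proof (cases "bt_digit_list t = []")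
      case False
      then have "hd (bt_digit_list t) \<in> set (bt_digit_list t)" "last (bt_digit_list t) \<in> set (bt_digit_list t)"
        by simp_all
      then show ?thesis using set_bt_digit_list[of t] by blast
    qed simp
  qed
qed simp

lemma ex_separated_differences_same_ends:
  assumes "infinite L"
  obtains X Y :: "nat \<Rightarrow> int"
  where "\<forall>i<n. X i \<in> L \<and> Y i \<in> L" "inj_on X {..<n}" "inj_on Y {..<n}"
    and "X ` {..<n} \<inter> Y ` {..<n} = {}" "ternary_separated u (\<lambda>i. X i - Y i) n"
    and "same_digit_ends (\<lambda>i. X i - Y i) n"
proof -
  define cls where "cls t = (hd (bt_digit_list t), last (bt_digit_list t))" for t
  have "finite (range cls)"
    unfolding cls_def by (rule finite_range_hd_last_bt_digit_list)
  then obtain c where "\<forall>M E. finite E \<longrightarrow>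
      (\<exists>x\<in>L - E. \<exists>y\<in>L - E. x \<noteq> y \<and> 3 ^ M dvd x - y \<and> cls (x - y) = c)"
    using ex_class_of_divisible_differences[OF assms] by blast
  from ex_separated_differences[OF this, of n u]
  obtain X Y where XY: "\<forall>i<n. X i \<in> L \<and> Y i \<in> L \<and> cls (X i - Y i) = c"
    and inj: "inj_on X {..<n}" "inj_on Y {..<n}"
    and disj: "X ` {..<n} \<inter> Y ` {..<n} = {}"
    and sep: "ternary_separated u (\<lambda>i. X i - Y i) n"
    by blast
  have "same_digit_ends (\<lambda>i. X i - Y i) n"
    unfolding same_digit_ends_def
  proof (intro allI impI)
    fix i assume i: "i < n"
    have "X i \<noteq> Y i" using disj i by blast
    moreover have "cls (X i - Y i) = cls (X 0 - Y 0)"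
      using XY[rule_format, of i] XY[rule_format, of 0] i by simp
    ultimately show "X i - Y i \<noteq> 0
            \<and> hd (bt_digit_list (X i - Y i)) = hd (bt_digit_list (X 0 - Y 0))
            \<and> last (bt_digit_list (X i - Y i)) = last (bt_digit_list (X 0 - Y 0))"
      unfolding cls_def by simp
  qed
  with that XY inj disj sep show ?thesis by blast
qed

lemma alt_signed_sum_pos:
  assumes "ternary_separated u d (2 * K)" "k < K" "d (2 * K - 1) \<noteq> 0"
  defines "s \<equiv> sgn (d (2 * K - 1))"
  shows "0 < u + (\<Sum>i<2 * K. alt_signs s k i * d i)"
proof -
  define m where "m = 2 * K - 1"
  have m: "Suc m = 2 * K" "2 * k < m" using assms(2) unfolding m_def by auto
  have "s \<in> {-1, 1}" "0 < s * d m" using assms(3) unfolding s_def m_def by (auto simp: sgn_if)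
  then show ?thesis
    using signed_sum_pos[of u d m "alt_signs s k"] assms(1) m
    by (auto simp: alt_signs_def)
qed

theorem theorem4p6:
  fixes A L :: "int set" and u :: int
  assumes "A \<subseteq> {1..}"
    and "L \<subseteq> {1..}" and "infinite L"
    and "{x + u | x. x \<in> SIP L} \<inter> {1..} \<subseteq> A"
  shows "\<forall>K::nat. K > 0 \<and> odd K \<longrightarrow>
           (\<forall>c::int. \<exists>a\<in>A. [int (zsc a) = c] (mod int K))"
proof (intro allI impI)
  fix K :: nat and c :: int
  assume K: "K > 0 \<and> odd K"
  obtain X Y where L: "\<forall>i<2 * K. X i \<in> L \<and> Y i \<in> L"
    and inj: "inj_on X {..<2 * K}" "inj_on Y {..<2 * K}"
    and disj: "X ` {..<2 * K} \<inter> Y ` {..<2 * K} = {}"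
    and sep: "ternary_separated u (\<lambda>i. X i - Y i) (2 * K)"
    and blocks: "same_digit_ends (\<lambda>i. X i - Y i) (2 * K)"
    using ex_separated_differences_same_ends[OF assms(3)] by blast
  define s where "s = sgn (X (2 * K - 1) - Y (2 * K - 1))"
  have last_block: "X (2 * K - 1) - Y (2 * K - 1) \<noteq> 0"
    using blocks K unfolding same_digit_ends_def by simp
  then have s: "s \<in> {-1, 1}" by (auto simp: s_def sgn_if)
  obtain k where "k < K"
    and cong: "[int (zsc (u + (\<Sum>i<2 * K. alt_signs s k i * (X i - Y i)))) = c] (mod int K)"
    using ex_alt_signed_sum_zsc_cong[OF conjunct2[OF K] sep blocks s] by blast
  define a where "a = u + (\<Sum>i<2 * K. alt_signs s k i * (X i - Y i))"
  have "(\<Sum>i<2 * K. alt_signs s k i * (X i - Y i)) \<in> SIP L"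
    using L inj disj s by (intro signed_sum_in_SIP) (auto simp: alt_signs_def)
  moreover have "0 < a"
    using alt_signed_sum_pos[OF sep \<open>k < K\<close> last_block] unfolding a_def s_def by simp
  ultimately have "a \<in> A" using assms(4) unfolding a_def by force
  then show "\<exists>a\<in>A. [int (zsc a) = c] (mod int K)" using cong unfolding a_def by blast
qed

end
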